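(* If $F$ satisfies Assumption 1, then for every $v\in[0,1]$ with $F(b^*_{v,F})>0$, $$F(b^*_{v,F})\ \ge\ \frac{F(v)}{e}.$$
   Context: Assumption 1: $F$ is a cumulative distribution function on $[0,1]$ which is continuously differentiable with density $f=F'$ and is strictly log-concave (equivalently $f/F$ is strictly decreasing on $(0,1)$). $U_{v,F}(b)=(v-b)F(b)$ and $b^*_{v,F}=\max\{\operatorname{argmax}_{b\in[0,1]}U_{v,F}(b)\}$. *)

theory Defs
  imports "HOL-Analysis.Analysis"
begin

definition assumption1 :: "(real \<Rightarrow> real) \<Rightarrow> (real \<Rightarrow> real) \<Rightarrow> bool" where
  "assumption1 F f \<longleftrightarrow>
     F 0 = 0 \<and> F 1 = 1 \<and> mono_on {0..1} F \<and>
     (\<forall>x\<in>{0..1}. (F has_real_derivative f x) (at x within {0..1})) \<and>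
     continuous_on {0..1} f \<and>
     (\<forall>x\<in>{0..1}. f x \<ge> 0) \<and>
     (\<forall>x y. 0 < x \<and> x < y \<and> y < 1 \<longrightarrow> f y / F y < f x / F x)"

definition U :: "real \<Rightarrow> (real \<Rightarrow> real) \<Rightarrow> real \<Rightarrow> real" where
  "U v F b = (v - b) * F b"

definition bstar :: "real \<Rightarrow> (real \<Rightarrow> real) \<Rightarrow> real" where
  "bstar v F = (GREATEST b. b \<in> {0..1} \<and> (\<forall>c\<in>{0..1}. U v F c \<le> U v F b))"

end

theory Submission
  imports Defs
begin

text \<open>If the maximiser \<open>b\<close> of \<open>(v - b) F(b)\<close> lies below \<open>v\<close>, it is interior and the first-order
  condition gives \<open>f(b)/F(b) = 1/(v - b)\<close>. Log-concavity makes \<open>f/F\<close> smaller on \<open>(b, v)\<close>, so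
  \<open>ln F\<close> grows by at most \<open>1\<close> from \<open>b\<close> to \<open>v\<close>, i.e. \<open>F(v) \<le> e F(b)\<close>. If \<open>v \<le> b\<close>, monotonicity
  gives \<open>F(v) \<le> F(b)\<close> directly.\<close>

lemma Greatest_argmax_on_compact:
  fixes g :: "real \<Rightarrow> real" and S :: "real set"
  assumes "compact S" "S \<noteq> {}" "continuous_on S g"
  defines "m \<equiv> GREATEST x. x \<in> S \<and> (\<forall>y\<in>S. g y \<le> g x)"
  shows "m \<in> S" "\<And>y. y \<in> S \<Longrightarrow> g y \<le> g m"
proof -
  obtain x0 where x0: "x0 \<in> S" "\<forall>y\<in>S. g y \<le> g x0"
    using continuous_attains_sup[OF assms(1-3)] by blast
  define A where "A = {x \<in> S. g x = g x0}"
  have A_eq: "A = {x. x \<in> S \<and> (\<forall>y\<in>S. g y \<le> g x)}"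
    unfolding A_def using x0 by (auto intro: antisym)
  have "closed A"
    unfolding A_def using assms(1,3)
    by (intro continuous_closed_preimage_constant) (auto simp: compact_imp_closed)
  moreover have "bounded A"
    using bounded_subset[OF compact_imp_bounded[OF assms(1)]] by (auto simp: A_def)
  ultimately have "compact A" by (simp add: compact_eq_bounded_closed)
  moreover have "A \<noteq> {}" using x0 A_def by auto
  ultimately obtain x where "x \<in> A" "\<forall>y\<in>A. y \<le> x"
    using compact_attains_sup by blast
  hence "m = x" unfolding m_def A_eq by (intro Greatest_equality) auto
  with \<open>x \<in> A\<close> show "m \<in> S" "\<And>y. y \<in> S \<Longrightarrow> g y \<le> g m"
    unfolding A_eq by auto
qed

lemma exp_growth_of_log_derivative_le:
  fixes F f :: "real \<Rightarrow> real"
  assumes "a \<le> b" "continuous_on {a..b} F" "\<And>x. x \<in> {a..b} \<Longrightarrow> F x > 0"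
    and "\<And>x. a < x \<Longrightarrow> x < b \<Longrightarrow> (F has_real_derivative f x) (at x)"
    and "\<And>x. a < x \<Longrightarrow> x < b \<Longrightarrow> f x \<le> c * F x"
  shows "F b \<le> exp (c * (b - a)) * F a"
proof -
  define g where "g x = ln (F x) - c * (x - a)" for x
  have "g b \<le> g a"
  proof (rule DERIV_nonpos_imp_decreasing_open[OF assms(1)])
    show "continuous_on {a..b} g"
      unfolding g_def using assms(2,3)
      by (intro continuous_intros) (auto simp: less_imp_neq[symmetric])
  next
    fix x assume x: "a < x" "x < b"
    have "(g has_real_derivative f x / F x - c) (at x)"
      unfolding g_def using assms(3,4) x
      by (auto intro!: derivative_eq_intros)
    moreover have "f x / F x - c \<le> 0"
      using assms(3,5) x by (simp add: divide_le_eq)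
    ultimately show "\<exists>y. (g has_real_derivative y) (at x) \<and> y \<le> 0" by blast
  qed
  hence "exp (ln (F b)) \<le> exp (c * (b - a) + ln (F a))"
    unfolding g_def by simp
  thus ?thesis using assms(1,3) by (simp add: exp_add)
qed

lemma assumption1_has_real_derivative_interior:
  assumes "assumption1 F f" "0 < x" "x < 1"
  shows "(F has_real_derivative f x) (at x)"
proof -
  have "\<forall>x\<in>{0..1}. (F has_real_derivative f x) (at x within {0..1})"
    using assms(1) unfolding assumption1_def by blast
  hence "(F has_real_derivative f x) (at x within {0..1})"
    using assms(2,3) by simp
  moreover have "x \<in> interior {0..1::real}" using assms(2,3) by simp
  ultimately show ?thesis using at_within_interior[of x "{0..1}"] by simp
qed

lemma assumption1_continuous_on:
  assumes "assumption1 F f"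
  shows "continuous_on {0..1} F"
proof (rule DERIV_continuous_on)
  show "\<And>x. x \<in> {0..1} \<Longrightarrow> (F has_real_derivative f x) (at x within {0..1})"
    using assms unfolding assumption1_def by blast
qed

lemma assumption1_bstar_max:
  assumes "assumption1 F f"
  shows "bstar v F \<in> {0..1}" "\<And>c. c \<in> {0..1} \<Longrightarrow> U v F c \<le> U v F (bstar v F)"
proof -
  have "continuous_on {0..1} (U v F)"
    unfolding U_def using assumption1_continuous_on[OF assms] by (intro continuous_intros)
  from Greatest_argmax_on_compact[OF compact_Icc _ this]
  show "bstar v F \<in> {0..1}" "\<And>c. c \<in> {0..1} \<Longrightarrow> U v F c \<le> U v F (bstar v F)"
    unfolding bstar_def by auto
qed

lemma U_first_order_condition:
  assumes "0 < b" "b < 1" "(F has_real_derivative f b) (at b)"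
    and "\<And>c. c \<in> {0..1} \<Longrightarrow> U v F c \<le> U v F b"
  shows "F b = (v - b) * f b"
proof -
  have deriv: "(U v F has_real_derivative - F b + (v - b) * f b) (at b)"
    unfolding U_def using assms(3) by (auto intro!: derivative_eq_intros)
  have local_max: "\<forall>y. \<bar>b - y\<bar> < min b (1 - b) \<longrightarrow> U v F y \<le> U v F b"
  proof (intro allI impI)
    fix y assume "\<bar>b - y\<bar> < min b (1 - b)"
    hence "y \<in> {0..1}" by (auto simp: abs_less_iff)
    thus "U v F y \<le> U v F b" by (rule assms(4))
  qed
  have "- F b + (v - b) * f b = 0"
    using DERIV_local_max[OF deriv _ local_max] assms(1,2) by simp
  thus ?thesis by simp
qed

lemma assumption1_growth_below_maximiser:
  assumes "assumption1 F f" "0 < b" "b < v" "v \<le> 1" "F b > 0"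
    and "\<And>c. c \<in> {0..1} \<Longrightarrow> U v F c \<le> U v F b"
  shows "F v \<le> exp 1 * F b"
proof -
  have mono: "mono_on {0..1} F"
    and logconc: "\<And>x y. 0 < x \<Longrightarrow> x < y \<Longrightarrow> y < 1 \<Longrightarrow> f y / F y < f x / F x"
    using assms(1) unfolding assumption1_def by blast+
  have b1: "b < 1" using assms(3,4) by simp
  have "F b = (v - b) * f b"
    by (rule U_first_order_condition[where F = F and f = f, OF assms(2) b1
          assumption1_has_real_derivative_interior[OF assms(1,2) b1] assms(6)])
  hence fb: "f b / F b = 1 / (v - b)" using assms(3,5) by (simp add: field_simps)
  have Fpos: "F x > 0" if "x \<in> {b..v}" for x
  proof -
    have "F b \<le> F x" using mono_onD[OF mono, of b x] assms(2,4) that by simp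
    with assms(5) show ?thesis by simp
  qed
  have "F v \<le> exp (1 / (v - b) * (v - b)) * F b"
  proof (rule exp_growth_of_log_derivative_le[where f = f])
    show "continuous_on {b..v} F"
      using continuous_on_subset[OF assumption1_continuous_on[OF assms(1)]] assms(2,4) by auto
    fix x assume x: "b < x" "x < v"
    show "(F has_real_derivative f x) (at x)"
      using assumption1_has_real_derivative_interior[OF assms(1)] x assms(2,4) by auto
    have "f x / F x < 1 / (v - b)" using logconc[OF assms(2) x(1)] x assms(4) fb by auto
    thus "f x \<le> 1 / (v - b) * F x" using Fpos[of x] x by (simp add: divide_less_eq)
  qed (use assms(3) Fpos in simp_all)
  also have "\<dots> = exp 1 * F b" using assms(3) by simp
  finally show ?thesis .
qed

theorem lemma4:
  fixes F f :: "real \<Rightarrow> real" and v :: real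
  assumes "assumption1 F f"
    and "v \<in> {0..1}"
    and "F (bstar v F) > 0"
  shows "F (bstar v F) \<ge> F v / exp 1"
proof -
  define b where "b = bstar v F"
  have F0: "F 0 = 0" and mono: "mono_on {0..1} F"
    using assms(1) unfolding assumption1_def by blast+
  have b: "b \<in> {0..1}" "\<And>c. c \<in> {0..1} \<Longrightarrow> U v F c \<le> U v F b" and Fb: "F b > 0"
    using assumption1_bstar_max[OF assms(1)] assms(3) unfolding b_def by auto
  show ?thesis
  proof (cases "v \<le> b")
    case True
    hence "F v \<le> F b" using mono_onD[OF mono] b(1) assms(2) by auto
    moreover have "0 \<le> F v" using mono_onD[OF mono, of 0 v] F0 assms(2) by auto
    hence "F v / exp 1 \<le> F v" by (simp add: divide_le_eq mult_le_cancel_left1)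
    ultimately show ?thesis unfolding b_def by linarith
  next
    case False
    have "b \<noteq> 0" using Fb F0 by auto
    hence "0 < b" using b(1) by simp
    with False assms(2) have "F v \<le> exp 1 * F b"
      using assumption1_growth_below_maximiser[OF assms(1) _ _ _ Fb b(2)] by simp
    thus ?thesis unfolding b_def by (simp add: divide_le_eq mult.commute)
  qed
qed

end
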